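(* Let $p\geq0$, $m\geq1$ and let $\mathcal Z_p$ be the orbifold hypersurface in $\mathbb P(2,2p+1,\dots,2p+1)$ (homogeneous coordinates $z_0,\dots,z_{2m+1}$) cut out by $z_0^{2p+1}+z_1^2+\cdots+z_{2m+1}^2=0$, viewed as the quotient of the corresponding link in $S^{4m+3}$ by the weighted circle action $z\mapsto(\zeta^2z_0,\zeta^{2p+1}z_1,\dots,\zeta^{2p+1}z_{2m+1})$. Then the orbifold singular stratum of $\mathcal Z_p$ is the quadric $Q_{2m-1}=\{z_0=0,\ z_1^2+\cdots+z_{2m+1}^2=0\}$ with isotropy group $\mathbb Z_{2p+1}$; hence the order of $\mathcal Z_p$ is $2p+1$.
   Context: The order of an orbifold is the least common multiple of the orders of its local uniformizing groups. *)

theory Defs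
  imports "HOL-Analysis.Analysis"
begin

text \<open>Points of C^(2m+2) are functions nat => complex vanishing beyond index 2m+1
  (coordinates z_0,...,z_(2m+1)).\<close>

definition coords :: "nat \<Rightarrow> (nat \<Rightarrow> complex) set" where
  "coords m = {z. \<forall>i>2*m+1. z i = 0}"

definition sphere_pt :: "nat \<Rightarrow> (nat \<Rightarrow> complex) \<Rightarrow> bool" where
  "sphere_pt m z \<longleftrightarrow> z \<in> coords m \<and> (\<Sum>i\<le>2*m+1. (cmod (z i))\<^sup>2) = 1"

definition link :: "nat \<Rightarrow> nat \<Rightarrow> (nat \<Rightarrow> complex) set" where
  "link m p = {z. sphere_pt m z \<and> (z 0) ^ (2*p+1) + (\<Sum>i=1..2*m+1. (z i)\<^sup>2) = 0}"

definition wact :: "nat \<Rightarrow> complex \<Rightarrow> (nat \<Rightarrow> complex) \<Rightarrow> (nat \<Rightarrow> complex)" where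
  "wact p \<zeta> z = (\<lambda>i. if i = 0 then \<zeta>\<^sup>2 * z 0 else \<zeta> ^ (2*p+1) * z i)"

definition isotropy :: "nat \<Rightarrow> (nat \<Rightarrow> complex) \<Rightarrow> complex set" where
  "isotropy p z = {\<zeta>. cmod \<zeta> = 1 \<and> wact p \<zeta> z = z}"

definition singular_stratum :: "nat \<Rightarrow> nat \<Rightarrow> (nat \<Rightarrow> complex) set" where
  "singular_stratum m p = {z \<in> link m p. isotropy p z \<noteq> {1}}"

definition quadric :: "nat \<Rightarrow> (nat \<Rightarrow> complex) set" where
  "quadric m = {z. sphere_pt m z \<and> z 0 = 0 \<and> (\<Sum>i=1..2*m+1. (z i)\<^sup>2) = 0}"

definition orbifold_order :: "nat \<Rightarrow> nat \<Rightarrow> nat" where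
  "orbifold_order m p = Lcm ((\<lambda>z. card (isotropy p z)) ` link m p)"

end

theory Submission
  imports Defs
begin

text \<open>Every point of the link has a nonzero coordinate among z_1, ..., z_(2m+1), and all these
  coordinates carry the same weight 2p+1. So \<zeta> fixes z iff \<zeta>^(2p+1) = 1 and, when z_0 \<noteq> 0,
  also \<zeta>^2 = 1, which for an odd root of unity forces \<zeta> = 1. Points with z_0 = 0 are exactly
  the quadric, where the isotropy is the full group of (2p+1)-th roots of unity; the quadric is
  nonempty for m \<ge> 1, so the lcm of the isotropy orders is 2p+1.\<close>

lemma eq_one_if_power_odd_and_power2_eq_one:
  fixes \<zeta> :: "'a :: monoid_mult"
  assumes "\<zeta> ^ (2*p+1) = 1" "\<zeta>\<^sup>2 = 1"
  shows "\<zeta> = 1"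
proof -
  have "\<zeta> ^ (2*p+1) = (\<zeta>\<^sup>2) ^ p * \<zeta>"
    by (simp only: power_add power_mult power_one_right)
  with assms show ?thesis by simp
qed

lemma isotropy_eq_if_nonzero_coord:
  assumes "i \<noteq> 0" "z i \<noteq> 0"
  shows "isotropy p z = {\<zeta>. \<zeta> ^ (2*p+1) = 1 \<and> (z 0 = 0 \<or> \<zeta>\<^sup>2 = 1)}"
proof (intro set_eqI iffI)
  fix \<zeta> :: complex assume "\<zeta> \<in> isotropy p z"
  then have fix_z: "\<And>j. wact p \<zeta> z j = z j"
    unfolding isotropy_def by simp
  from fix_z[of i] assms have "\<zeta> ^ (2*p+1) = 1"
    by (simp add: wact_def)
  moreover from fix_z[of 0] have "z 0 = 0 \<or> \<zeta>\<^sup>2 = 1"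
    by (simp add: wact_def)
  ultimately show "\<zeta> \<in> {\<zeta>. \<zeta> ^ (2*p+1) = 1 \<and> (z 0 = 0 \<or> \<zeta>\<^sup>2 = 1)}"
    by simp
next
  fix \<zeta> :: complex assume "\<zeta> \<in> {\<zeta>. \<zeta> ^ (2*p+1) = 1 \<and> (z 0 = 0 \<or> \<zeta>\<^sup>2 = 1)}"
  then have root: "\<zeta> ^ (2*p+1) = 1" and "z 0 = 0 \<or> \<zeta>\<^sup>2 = 1"
    by simp_all
  then have "wact p \<zeta> z = z"
    by (auto simp: wact_def)
  moreover have "cmod \<zeta> = 1"
    using root by (metis less_add_one less_nat_zero_code power_eq_1_iff)
  ultimately show "\<zeta> \<in> isotropy p z"
    by (simp add: isotropy_def)
qed

lemma link_has_nonzero_coord: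
  assumes "z \<in> link m p"
  obtains i where "i \<in> {1..2*m+1}" "z i \<noteq> 0"
proof -
  have sphere: "sphere_pt m z"
    and eqn: "z 0 ^ (2*p+1) + (\<Sum>i=1..2*m+1. (z i)\<^sup>2) = 0"
    using assms by (simp_all add: link_def)
  have "\<exists>i\<in>{1..2*m+1}. z i \<noteq> 0"
  proof (rule ccontr)
    assume "\<not> ?thesis"
    then have tail: "\<forall>i\<in>{1..2*m+1}. z i = 0" by simp
    with eqn have "z 0 ^ (2*p+1) = 0" by simp
    then have "z 0 = 0" by (metis power_eq_0_iff)
    with tail have "\<forall>i\<le>2*m+1. z i = 0"
      by (metis atLeastAtMost_iff linorder_not_le less_one)
    then have "(\<Sum>i\<le>2*m+1. (cmod (z i))\<^sup>2) = 0" by simp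
    with sphere show False by (simp add: sphere_pt_def)
  qed
  with that show ?thesis by blast
qed

lemma quadric_eq_link_zero_coord: "quadric m = {z \<in> link m p. z 0 = 0}"
  by (auto simp: quadric_def link_def)

lemma isotropy_quadric:
  assumes "z \<in> quadric m"
  shows "isotropy p z = {\<zeta>. \<zeta> ^ (2*p+1) = 1}"
proof -
  from assms have "z \<in> link m p" "z 0 = 0"
    by (simp_all add: quadric_eq_link_zero_coord[of m p])
  moreover obtain i where "i \<noteq> 0" "z i \<noteq> 0"
    using link_has_nonzero_coord[OF \<open>z \<in> link m p\<close>] by force
  ultimately show ?thesis
    by (simp add: isotropy_eq_if_nonzero_coord)
qed

lemma isotropy_link_diff_quadric:
  assumes "z \<in> link m p - quadric m"
  shows "isotropy p z = {1}"
proof -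
  from assms have "z \<in> link m p" "z 0 \<noteq> 0"
    by (simp_all add: quadric_eq_link_zero_coord[of m p])
  moreover obtain i where "i \<noteq> 0" "z i \<noteq> 0"
    using link_has_nonzero_coord[OF \<open>z \<in> link m p\<close>] by force
  ultimately have "isotropy p z = {\<zeta>. \<zeta> ^ (2*p+1) = 1 \<and> \<zeta>\<^sup>2 = 1}"
    by (simp add: isotropy_eq_if_nonzero_coord)
  also have "\<dots> = {1}"
    by (auto intro: eq_one_if_power_odd_and_power2_eq_one)
  finally show ?thesis .
qed

lemma card_isotropy_quadric:
  assumes "z \<in> quadric m"
  shows "card (isotropy p z) = 2*p+1"
  using card_roots_unity_eq[of "2*p+1"] by (simp add: isotropy_quadric[OF assms])

lemma quadric_nonempty:
  assumes "m \<ge> 1"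
  shows "quadric m \<noteq> {}"
proof -
  define z :: "nat \<Rightarrow> complex" where
    "z = (\<lambda>i. if i = 1 then 1 / sqrt 2 else if i = 2 then \<i> / sqrt 2 else 0)"
  have "z \<in> coords m"
    using assms by (simp add: coords_def z_def)
  moreover have "(\<Sum>i\<le>2*m+1. (cmod (z i))\<^sup>2) = (\<Sum>i\<in>{1,2}. (cmod (z i))\<^sup>2)"
    by (rule sum.mono_neutral_right) (use assms in \<open>auto simp: z_def\<close>)
  moreover have "(cmod (z 1))\<^sup>2 + (cmod (z 2))\<^sup>2 = 1"
    by (simp add: z_def norm_divide power_divide)
  moreover have "(\<Sum>i=1..2*m+1. (z i)\<^sup>2) = (\<Sum>i\<in>{1,2}. (z i)\<^sup>2)"
    by (rule sum.mono_neutral_right) (use assms in \<open>auto simp: z_def\<close>)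
  moreover have "(z 1)\<^sup>2 + (z 2)\<^sup>2 = 0"
    by (simp add: z_def power_divide)
  ultimately have "z \<in> quadric m"
    by (simp add: quadric_def sphere_pt_def z_def)
  then show ?thesis by blast
qed

lemma Lcm_eq_if_subset_one_and_mem:
  fixes n :: nat
  assumes "A \<subseteq> {1, n}" "n \<in> A"
  shows "Lcm A = n"
proof (rule dvd_antisym)
  show "Lcm A dvd n"
    using Lcm_subset[OF assms(1)] by simp
  show "n dvd Lcm A"
    using assms(2) by (rule dvd_Lcm)
qed

theorem lemma4p4:
  fixes m p :: nat
  assumes "m \<ge> 1"
  shows "(\<forall>z \<in> quadric m. isotropy p z = {\<zeta>. \<zeta> ^ (2*p+1) = 1})
       \<and> (\<forall>z \<in> link m p - quadric m. isotropy p z = {1})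
       \<and> quadric m \<subseteq> link m p
       \<and> (p \<ge> 1 \<longrightarrow> singular_stratum m p = quadric m)
       \<and> orbifold_order m p = 2*p+1"
proof -
  have quadric_subset: "quadric m \<subseteq> link m p"
    by (auto simp: quadric_eq_link_zero_coord[of m p])
  have card_isotropy_link: "card (isotropy p z) \<in> {1, 2*p+1}" if "z \<in> link m p" for z
    using that isotropy_link_diff_quadric card_isotropy_quadric by (cases "z \<in> quadric m") auto
  have "singular_stratum m p = quadric m" if "p \<ge> 1"
  proof -
    have "isotropy p z \<noteq> {1}" if "z \<in> quadric m" for z
      using card_isotropy_quadric[OF that, where p = p] \<open>p \<ge> 1\<close> by auto
    then show ?thesis
      using quadric_subset isotropy_link_diff_quadric unfolding singular_stratum_def by blast
  qed
  moreover have "orbifold_order m p = 2*p+1"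
    unfolding orbifold_order_def
  proof (rule Lcm_eq_if_subset_one_and_mem)
    show "(\<lambda>z. card (isotropy p z)) ` link m p \<subseteq> {1, 2*p+1}"
      using card_isotropy_link by blast
    obtain q where "q \<in> quadric m"
      using quadric_nonempty[OF assms] by blast
    then show "2*p+1 \<in> (\<lambda>z. card (isotropy p z)) ` link m p"
      using quadric_subset card_isotropy_quadric by (metis image_eqI subsetD)
  qed
  ultimately show ?thesis
    using isotropy_quadric isotropy_link_diff_quadric quadric_subset by blast
qed

end
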